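(* Let $C=\{c_1,\dots,c_m\}$ with axis $c_1\lhd\dots\lhd c_m$, and for $1\le i\le j\le m$ let $f(i,j)$ be the probability that, in a vote sampled from the Conitzer distribution for this axis, the candidates $c_i,\dots,c_j$ occupy the top $j-i+1$ positions. Then $f(\ell,\ell)=1/m$ for all $\ell\in[m]$ and $f(1,m)=1$; moreover, for all integers $i,j$ with $1<i\le j<m$: $f(i,j)=1/m$, $f(1,i)=(i+1)/(2m)$, and $f(j,m)=(m-j+2)/(2m)$.
   Context: A vote over $C$ is a total order on $C$ (position 1 is the top). The Conitzer (random peak) distribution for the axis $c_1\lhd\dots\lhd c_m$ generates a vote as follows: pick a candidate uniformly at random and rank it first; then in each of $m-1$ iterations, the already selected candidates form an interval $\{c_a,\dots,c_b\}$ of the axis, and one chooses uniformly at random among the candidates $c_{a-1}$ and $c_{b+1}$ that exist (if only one exists it is chosen with probability 1) and places it in the highest still-available position. *)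

theory Defs
  imports "HOL-Probability.Probability"
begin

text \<open>Candidates c_1,...,c_m are represented by their axis indices 1,...,m.
A vote is the list of candidates from position 1 (top) downwards.\<close>

text \<open>Extension step: the already selected candidates form the interval {a..b};
n further iterations remain. Returns the list of subsequently placed candidates.\<close>
fun conitzer_ext :: "nat \<Rightarrow> nat \<Rightarrow> nat \<Rightarrow> nat \<Rightarrow> nat list pmf" where
  "conitzer_ext m a b 0 = return_pmf []"
| "conitzer_ext m a b (Suc n) =
     (if 1 < a \<and> b < m then
        bind_pmf (pmf_of_set {a - 1, b + 1})
          (\<lambda>c. map_pmf (Cons c) (conitzer_ext m (min a c) (max b c) n))
      else if 1 < a then map_pmf (Cons (a - 1)) (conitzer_ext m (a - 1) b n)
      else if b < m then map_pmf (Cons (b + 1)) (conitzer_ext m a (b + 1) n)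
      else return_pmf [])"

definition conitzer :: "nat \<Rightarrow> nat list pmf" where
  "conitzer m = bind_pmf (pmf_of_set {1..m})
     (\<lambda>c. map_pmf (Cons c) (conitzer_ext m c c (m - 1)))"

definition top_interval_prob :: "nat \<Rightarrow> nat \<Rightarrow> nat \<Rightarrow> real" where
  "top_interval_prob m i j =
     measure_pmf.prob (conitzer m) {v. set (take (j - i + 1) v) = {i..j}}"

end

theory Submission
  imports Defs
begin

text \<open>Condition on the peak c. The top k + 1 candidates of the vote then form the interval reached
from {c} by a walk that adds one neighbouring candidate per step, so the event that c_i, ..., c_j
occupy the top j - i + 1 positions is the event that this walk reaches {i..j} in j - i steps.
Away from the ends of the axis every step is a fair coin flip, so the walk from {c} reaches an
interval {i..j} with 1 < i and j < m with probability binomial(j - i, c - i) / 2^(j - i), and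
these sum to 1 over the peaks c. For a prefix {1..i} with i < m the steps become forced once the
walk hits c_1; the resulting probabilities wall_prob sum to (i + 1) / 2 over the peaks. Suffixes
reduce to prefixes by reflecting the axis, and {1..m} is reached with certainty.\<close>

lemma measure_bind_pmf_of_set:
  assumes "finite S" "S \<noteq> {}"
  shows "measure_pmf.prob (pmf_of_set S \<bind> f) A = (\<Sum>x\<in>S. measure_pmf.prob (f x) A) / card S"
  unfolding measure_pmf_bind
  using assms by (subst measure_pmf.measure_bind[where N="count_space UNIV"])
    (auto simp: integral_pmf_of_set measure_pmf_in_subprob_algebra)

definition cover_prob :: "nat \<Rightarrow> nat \<Rightarrow> nat \<Rightarrow> nat \<Rightarrow> nat \<Rightarrow> nat set \<Rightarrow> real" where
  "cover_prob m a b n k S =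
     measure_pmf.prob (conitzer_ext m a b n) {w. {a..b} \<union> set (take k w) = S}"

lemma cover_prob_0: "cover_prob m a b n 0 S = (if {a..b} = S then 1 else 0)"
  by (simp add: cover_prob_def)

lemma cover_prob_eq_0:
  assumes "a \<le> b" "a \<notin> S \<or> b \<notin> S"
  shows "cover_prob m a b n k S = 0"
proof -
  have "{w. {a..b} \<union> set (take k w) = S} = {}"
    using assms by auto
  then show ?thesis
    by (simp add: cover_prob_def)
qed

lemma prob_Cons_conitzer_ext:
  assumes "insert c {a..b} = {a'..b'}"
  shows "measure_pmf.prob (map_pmf (Cons c) (conitzer_ext m a' b' n))
           {w. {a..b} \<union> set (take (Suc k) w) = S} = cover_prob m a' b' n k S"
  using assms by (simp add: cover_prob_def flip: Un_insert_left)

lemma cover_prob_Suc: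
  assumes "a \<le> b"
  shows "cover_prob m a b (Suc n) (Suc k) S =
    (if 1 < a \<and> b < m then (cover_prob m (a - 1) b n k S + cover_prob m a (b + 1) n k S) / 2
     else if 1 < a then cover_prob m (a - 1) b n k S
     else if b < m then cover_prob m a (b + 1) n k S
     else if {a..b} = S then 1 else 0)"
proof -
  have left: "insert (a - 1) {a..b} = {a - 1..b}" if "1 < a"
    using that assms by (auto simp: Icc_eq_insert_lb_nat)
  have right: "insert (b + 1) {a..b} = {a..b + 1}"
    using assms by auto
  show ?thesis
  proof (cases "1 < a \<and> b < m")
    case True
    have "a - 1 \<noteq> b + 1"
      using assms by linarith
    moreover have "min a (a - 1) = a - 1" "max b (a - 1) = b" "min a (b + 1) = a" "max b (b + 1) = b + 1"
      using True assms by auto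
    ultimately show ?thesis
      using True prob_Cons_conitzer_ext[OF left] prob_Cons_conitzer_ext[OF right]
      by (simp add: cover_prob_def[of m a b] measure_bind_pmf_of_set del: measure_map_pmf)
  next
    case False
    then show ?thesis
      using prob_Cons_conitzer_ext[OF left] prob_Cons_conitzer_ext[OF right]
      by (simp add: cover_prob_def[of m a b])
  qed
qed

lemma cover_prob_interior:
  assumes "1 < i" "j < m" "i \<le> a" "a \<le> b" "b \<le> j" "k = (a - i) + (j - b)" "k \<le> n"
  shows "cover_prob m a b n k {i..j} = (k choose (a - i)) / 2 ^ k"
  using assms
proof (induction k arbitrary: a b n)
  case 0
  then show ?case
    by (simp add: cover_prob_0)
next
  case (Suc k)
  note bounds = Suc.prems(1-5) and steps = Suc.prems(6)
  obtain n' where n: "n = Suc n'"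
    using Suc.prems by (cases n) auto
  have IH: "cover_prob m a' b' n' k {i..j} = (k choose (a' - i)) / 2 ^ k"
    if "i \<le> a'" "a' \<le> b'" "b' \<le> j" "k = (a' - i) + (j - b')" for a' b'
    by (rule Suc.IH) (use that Suc.prems n in auto)
  have right: "cover_prob m a (b + 1) n' k {i..j} = (k choose (a - i)) / 2 ^ k"
  proof (cases "b = j")
    case True
    then have "a - i = Suc k"
      using steps by simp
    then show ?thesis
      using True bounds by (simp add: cover_prob_eq_0)
  next
    case False
    show ?thesis
      by (rule IH) (use False bounds steps in auto)
  qed
  have "cover_prob m a b n (Suc k) {i..j}
      = (cover_prob m (a - 1) b n' k {i..j} + cover_prob m a (b + 1) n' k {i..j}) / 2"
    using bounds n by (simp add: cover_prob_Suc)
  also have "\<dots> = (Suc k choose (a - i)) / 2 ^ Suc k"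
  proof (cases "a = i")
    case True
    then have "cover_prob m (a - 1) b n' k {i..j} = 0"
      using bounds by (simp add: cover_prob_eq_0)
    then show ?thesis
      using right True by simp
  next
    case False
    then obtain l where l: "a - i = Suc l"
      using bounds by (cases "a - i") auto
    have "cover_prob m (a - 1) b n' k {i..j} = (k choose (a - 1 - i)) / 2 ^ k"
      by (rule IH) (use False bounds steps in auto)
    moreover have "a - 1 - i = l"
      using l by linarith
    ultimately show ?thesis
      using right l by (simp add: add_divide_distrib)
  qed
  finally show ?case .
qed

text \<open>wall_prob l r is the probability that the walk next to an end of the axis reaches its
target when l candidates remain to be added on the side of that end and r on the other side:
both sides are equally likely until the end is reached, after which every step is forced.\<close>

fun wall_prob :: "nat \<Rightarrow> nat \<Rightarrow> real" where
  "wall_prob 0 r = 1"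
| "wall_prob (Suc l) 0 = wall_prob l 0 / 2"
| "wall_prob (Suc l) (Suc r) = (wall_prob l (Suc r) + wall_prob (Suc l) r) / 2"

lemma cover_prob_left_wall:
  assumes "j < m" "1 \<le> a" "a \<le> b" "b \<le> j" "k = (a - 1) + (j - b)" "k \<le> n"
  shows "cover_prob m a b n k {1..j} = wall_prob (a - 1) (j - b)"
  using assms
proof (induction k arbitrary: a b n)
  case 0
  then show ?case
    by (simp add: cover_prob_0)
next
  case (Suc k)
  note bounds = Suc.prems(1-4) and steps = Suc.prems(5)
  obtain n' where n: "n = Suc n'"
    using Suc.prems by (cases n) auto
  have IH: "cover_prob m a' b' n' k {1..j} = wall_prob (a' - 1) (j - b')"
    if "1 \<le> a'" "a' \<le> b'" "b' \<le> j" "k = (a' - 1) + (j - b')" for a' b'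
    by (rule Suc.IH) (use that Suc.prems n in auto)
  show ?case
  proof (cases "a = 1")
    case True
    have "cover_prob m a (b + 1) n' k {1..j} = wall_prob (a - 1) (j - (b + 1))"
      by (rule IH) (use True bounds steps in auto)
    then show ?thesis
      using True bounds n by (simp add: cover_prob_Suc)
  next
    case False
    then have "1 < a"
      using bounds by simp
    then obtain l where l: "a - 1 = Suc l"
      by (cases "a - 1") auto
    have "cover_prob m (a - 1) b n' k {1..j} = wall_prob (a - 1 - 1) (j - b)"
      by (rule IH) (use False bounds steps in auto)
    moreover have "a - 1 - 1 = l"
      using l by linarith
    ultimately have left: "cover_prob m (a - 1) b n' k {1..j} = wall_prob l (j - b)"
      by simp
    show ?thesis
    proof (cases "b = j")
      case True
      then have "cover_prob m a (b + 1) n' k {1..j} = 0"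
        using bounds by (simp add: cover_prob_eq_0)
      then show ?thesis
        using left l True \<open>1 < a\<close> bounds n by (simp add: cover_prob_Suc)
    next
      case False
      then obtain r where r: "j - b = Suc r"
        using bounds by (cases "j - b") auto
      have "cover_prob m a (b + 1) n' k {1..j} = wall_prob (a - 1) (j - (b + 1))"
        by (rule IH) (use False bounds steps in auto)
      moreover have "j - (b + 1) = r"
        using r by linarith
      ultimately have "cover_prob m a (b + 1) n' k {1..j} = wall_prob (Suc l) r"
        using l by simp
      then show ?thesis
        using left l r \<open>1 < a\<close> bounds n by (simp add: cover_prob_Suc)
    qed
  qed
qed

lemma cover_prob_full:
  assumes "1 \<le> a" "a \<le> b" "b \<le> m" "k = (a - 1) + (m - b)" "k \<le> n"
  shows "cover_prob m a b n k {1..m} = 1"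
  using assms
proof (induction k arbitrary: a b n)
  case 0
  then show ?case
    by (simp add: cover_prob_0)
next
  case (Suc k)
  note bounds = Suc.prems(1-3) and steps = Suc.prems(4)
  obtain n' where n: "n = Suc n'"
    using Suc.prems by (cases n) auto
  have IH: "cover_prob m a' b' n' k {1..m} = 1"
    if "1 \<le> a'" "a' \<le> b'" "b' \<le> m" "k = (a' - 1) + (m - b')" for a' b'
    by (rule Suc.IH) (use that Suc.prems n in auto)
  have "1 < a \<Longrightarrow> cover_prob m (a - 1) b n' k {1..m} = 1"
    by (rule IH) (use bounds steps in auto)
  moreover have "b < m \<Longrightarrow> cover_prob m a (b + 1) n' k {1..m} = 1"
    by (rule IH) (use bounds steps in auto)
  moreover have "1 < a \<or> b < m"
    using bounds steps by auto
  ultimately show ?case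
    using bounds n by (auto simp: cover_prob_Suc)
qed

lemma cover_prob_reflect:
  assumes "1 \<le> a" "a \<le> b" "b \<le> m" "1 \<le> i" "i \<le> j" "j \<le> m"
  shows "cover_prob m (m + 1 - b) (m + 1 - a) n k {m + 1 - j..m + 1 - i} = cover_prob m a b n k {i..j}"
  using assms
proof (induction k arbitrary: a b n)
  case 0
  then show ?case
    by (auto simp: cover_prob_0)
next
  case (Suc k)
  show ?case
  proof (cases n)
    case 0
    then show ?thesis
      using Suc.prems by (auto simp: cover_prob_def indicator_def)
  next
    case (Suc n')
    have left: "cover_prob m (m + 1 - b) (m + 1 - a + 1) n' k {m + 1 - j..m + 1 - i}
        = cover_prob m (a - 1) b n' k {i..j}" if "1 < a"
      using Suc.IH[of "a - 1" b n'] Suc.prems that by (simp add: Suc_diff_le)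
    have right: "cover_prob m (m + 1 - b - 1) (m + 1 - a) n' k {m + 1 - j..m + 1 - i}
        = cover_prob m a (b + 1) n' k {i..j}" if "b < m"
      using Suc.IH[of a "b + 1" n'] Suc.prems that by simp
    have base: "{m + 1 - b..m + 1 - a} = {m + 1 - j..m + 1 - i} \<longleftrightarrow> {a..b} = {i..j}"
      using Suc.prems by auto
    have conds: "1 < m + 1 - b \<longleftrightarrow> b < m" "m + 1 - a < m \<longleftrightarrow> 1 < a"
      using Suc.prems by auto
    have ordered: "m + 1 - b \<le> m + 1 - a"
      using Suc.prems by simp
    show ?thesis
      unfolding \<open>n = Suc n'\<close> cover_prob_Suc[OF ordered] cover_prob_Suc[OF \<open>a \<le> b\<close>] conds
      using left right base by (cases "1 < a"; cases "b < m") (simp_all add: add.commute)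
  qed
qed

lemma wall_prob_diagonal_sum: "(\<Sum>l\<le>n. wall_prob l (n - l)) = (real n + 2) / 2"
proof (induction n)
  case 0
  then show ?case
    by simp
next
  case (Suc n)
  let ?D = "\<Sum>l\<le>n. wall_prob l (n - l)"
  have "wall_prob (Suc l) (n - l) = (wall_prob l (n - l) + wall_prob (Suc l) (n - Suc l)) / 2"
    if "l < n" for l
    using that by (simp add: Suc_diff_Suc[symmetric])
  then have "(\<Sum>l<n. wall_prob (Suc l) (n - l))
      = (\<Sum>l<n. (wall_prob l (n - l) + wall_prob (Suc l) (n - Suc l)) / 2)"
    by (intro sum.cong) auto
  also have "\<dots> = ((\<Sum>l<n. wall_prob l (n - l)) + (\<Sum>l<n. wall_prob (Suc l) (n - Suc l))) / 2"
    by (simp add: sum.distrib flip: sum_divide_distrib)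
  also have "\<dots> = ((?D - wall_prob n 0) + (?D - 1)) / 2"
  proof -
    have "(\<Sum>l<n. wall_prob l (n - l)) = ?D - wall_prob n 0"
      by (simp add: lessThan_Suc_atMost[symmetric])
    moreover have "(\<Sum>l<n. wall_prob (Suc l) (n - Suc l)) = ?D - 1"
      by (simp add: sum.atMost_shift)
    ultimately show ?thesis
      by simp
  qed
  finally have inner: "(\<Sum>l<n. wall_prob (Suc l) (n - l)) = ((?D - wall_prob n 0) + (?D - 1)) / 2" .
  have "(\<Sum>l\<le>Suc n. wall_prob l (Suc n - l)) = 1 + (\<Sum>l\<le>n. wall_prob (Suc l) (n - l))"
    by (subst sum.atMost_Suc_shift) simp
  also have "\<dots> = 1 + (\<Sum>l<n. wall_prob (Suc l) (n - l)) + wall_prob n 0 / 2"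
    by (simp add: lessThan_Suc_atMost[symmetric])
  also have "\<dots> = (real (Suc n) + 2) / 2"
    unfolding inner Suc.IH by (simp add: field_simps)
  finally show ?case .
qed

lemma top_interval_prob_eq_peak_sum:
  assumes "1 \<le> i" "i \<le> j" "j \<le> m"
  shows "top_interval_prob m i j = (\<Sum>c\<in>{i..j}. cover_prob m c c (m - 1) (j - i) {i..j}) / m"
proof -
  have "top_interval_prob m i j = (\<Sum>c\<in>{1..m}. cover_prob m c c (m - 1) (j - i) {i..j}) / m"
    using assms by (simp add: top_interval_prob_def conitzer_def measure_bind_pmf_of_set cover_prob_def)
  also have "(\<Sum>c\<in>{1..m}. cover_prob m c c (m - 1) (j - i) {i..j})
      = (\<Sum>c\<in>{i..j}. cover_prob m c c (m - 1) (j - i) {i..j})"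
    by (rule sum.mono_neutral_right) (use assms in \<open>auto intro!: cover_prob_eq_0\<close>)
  finally show ?thesis .
qed

lemma top_interval_prob_singleton:
  assumes "1 \<le> l" "l \<le> m"
  shows "top_interval_prob m l l = 1 / real m"
  using assms by (simp add: top_interval_prob_eq_peak_sum cover_prob_0)

lemma top_interval_prob_full:
  assumes "1 \<le> m"
  shows "top_interval_prob m 1 m = 1"
proof -
  have "cover_prob m c c (m - 1) (m - 1) {1..m} = 1" if "c \<in> {1..m}" for c
    by (rule cover_prob_full) (use that in auto)
  then show ?thesis
    using assms by (simp add: top_interval_prob_eq_peak_sum)
qed

lemma top_interval_prob_interior:
  assumes "1 < i" "i \<le> j" "j < m"
  shows "top_interval_prob m i j = 1 / real m"
proof -
  have "cover_prob m c c (m - 1) (j - i) {i..j} = ((j - i) choose (c - i)) / 2 ^ (j - i)"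
    if "c \<in> {i..j}" for c
    by (rule cover_prob_interior) (use that assms in auto)
  then have "top_interval_prob m i j = (\<Sum>c\<in>{i..j}. ((j - i) choose (c - i)) / 2 ^ (j - i)) / m"
    using assms by (simp add: top_interval_prob_eq_peak_sum)
  also have "(\<Sum>c\<in>{i..j}. ((j - i) choose (c - i)) / 2 ^ (j - i)) = (\<Sum>l\<le>j - i. ((j - i) choose l) / 2 ^ (j - i))"
    by (rule sum.reindex_bij_witness[where i="\<lambda>l. l + i" and j="\<lambda>c. c - i"]) (use assms in auto)
  also have "\<dots> = 1"
    by (simp flip: sum_divide_distrib of_nat_sum add: choose_row_sum)
  finally show ?thesis
    by simp
qed

lemma top_interval_prob_prefix:
  assumes "1 \<le> i" "i < m"
  shows "top_interval_prob m 1 i = real (i + 1) / (2 * real m)"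
proof -
  have "cover_prob m c c (m - 1) (i - 1) {1..i} = wall_prob (c - 1) (i - c)" if "c \<in> {1..i}" for c
    by (rule cover_prob_left_wall) (use that assms in auto)
  then have "top_interval_prob m 1 i = (\<Sum>c\<in>{1..i}. wall_prob (c - 1) (i - c)) / m"
    using assms by (simp add: top_interval_prob_eq_peak_sum)
  also have "(\<Sum>c\<in>{1..i}. wall_prob (c - 1) (i - c)) = (\<Sum>l\<le>i - 1. wall_prob l (i - 1 - l))"
    by (rule sum.reindex_bij_witness[where i="\<lambda>l. l + 1" and j="\<lambda>c. c - 1"]) (use assms in auto)
  also have "\<dots> = (i + 1) / 2"
    by (subst wall_prob_diagonal_sum) (use assms in \<open>simp add: of_nat_diff\<close>)
  finally show ?thesis
    by simp
qed

lemma top_interval_prob_reflect: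
  assumes "1 \<le> i" "i \<le> j" "j \<le> m"
  shows "top_interval_prob m (m + 1 - j) (m + 1 - i) = top_interval_prob m i j"
proof -
  have "top_interval_prob m (m + 1 - j) (m + 1 - i)
      = (\<Sum>c\<in>{m + 1 - j..m + 1 - i}. cover_prob m c c (m - 1) (j - i) {m + 1 - j..m + 1 - i}) / m"
    using top_interval_prob_eq_peak_sum[of "m + 1 - j" "m + 1 - i" m] assms by simp
  also have "(\<Sum>c\<in>{m + 1 - j..m + 1 - i}. cover_prob m c c (m - 1) (j - i) {m + 1 - j..m + 1 - i})
      = (\<Sum>c\<in>{i..j}. cover_prob m (m + 1 - c) (m + 1 - c) (m - 1) (j - i) {m + 1 - j..m + 1 - i})"
    by (rule sum.reindex_bij_witness[where i="\<lambda>c. m + 1 - c" and j="\<lambda>c. m + 1 - c"]) (use assms in auto)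
  also have "\<dots> = (\<Sum>c\<in>{i..j}. cover_prob m c c (m - 1) (j - i) {i..j})"
    by (rule sum.cong[OF refl], rule cover_prob_reflect) (use assms in auto)
  also have "\<dots> / m = top_interval_prob m i j"
    using assms by (simp add: top_interval_prob_eq_peak_sum)
  finally show ?thesis .
qed

lemma top_interval_prob_suffix:
  assumes "1 < j" "j \<le> m"
  shows "top_interval_prob m j m = real (m - j + 2) / (2 * real m)"
proof -
  have "top_interval_prob m j m = top_interval_prob m 1 (m + 1 - j)"
    using top_interval_prob_reflect[of j m m] assms by simp
  also have "\<dots> = real (m - j + 2) / (2 * real m)"
    using top_interval_prob_prefix[of "m + 1 - j" m] assms by (simp add: Suc_diff_le)
  finally show ?thesis .
qed

theorem proposition1:
  fixes m :: nat
  assumes "m \<ge> 1"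
  shows "(\<forall>l\<in>{1..m}. top_interval_prob m l l = 1 / real m)
    \<and> top_interval_prob m 1 m = 1
    \<and> (\<forall>i j. 1 < i \<and> i \<le> j \<and> j < m \<longrightarrow>
          top_interval_prob m i j = 1 / real m
        \<and> top_interval_prob m 1 i = real (i + 1) / (2 * real m)
        \<and> top_interval_prob m j m = real (m - j + 2) / (2 * real m))"
proof (intro conjI ballI allI impI)
  show "top_interval_prob m l l = 1 / real m" if "l \<in> {1..m}" for l
    using that by (simp add: top_interval_prob_singleton)
  show "top_interval_prob m 1 m = 1"
    using assms by (rule top_interval_prob_full)
  fix i j
  assume ij: "1 < i \<and> i \<le> j \<and> j < m"
  show "top_interval_prob m i j = 1 / real m"
    by (rule top_interval_prob_interior) (use ij in auto)
  show "top_interval_prob m 1 i = real (i + 1) / (2 * real m)"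
    by (rule top_interval_prob_prefix) (use ij in auto)
  show "top_interval_prob m j m = real (m - j + 2) / (2 * real m)"
    by (rule top_interval_prob_suffix) (use ij in auto)
qed

end
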